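(* Let $V$ be a finite nonempty set and $f:\{0,1\}^V\to\{0,1\}^V$ an and-net. Every subnetwork of $f$ has a unique fixed point if and only if $f$ has no circular subnetwork (no subnetwork that is positive-circular or negative-circular).
   Context: For nonempty $I\subseteq V$ and $z\in\{0,1\}^{V\setminus I}$, the subnetwork of $f$ induced by $z$ is $h:\{0,1\}^I\to\{0,1\}^I$ with $h(x|_I)=f(x)|_I$ for all $x$ whose restriction to $V\setminus I$ is $z$ ($f$ is a subnetwork of itself). For a network $g$ on $W$ and $x^{j\alpha}$ the point equal to $x$ except its $j$-component is $\alpha$, the global interaction graph $G(g)$ is the signed digraph on $W$ with a positive (resp. negative) arc from $j$ to $i$ iff $g_i(x^{j1})-g_i(x^{j0})=1$ (resp. $=-1$) for at least one $x$. $f$ is an and-net if $G(f)$ has at most one arc from $j$ to $i$ for all $i,j$ and for every $i$ and $x$: $f_i(x)=1$ iff $G(f)$ has no positive arc $j\to i$ with $x_j=0$ and no negative arc $j\to i$ with $x_j=1$. A cycle is a subgraph with at most one arc between any ordered pair whose underlying unsigned digraph is a directed cycle; positive (negative) if it has an even (odd) number of negative arcs. $g$ is positive-circular (negative-circular) if $G(g)$ itself is a positive (negative) cycle through all vertices of $W$. *)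

theory Defs
  imports Main
begin

text \<open>Configurations in {0,1}^W are represented as Boolean functions that are False outside W.
A network on W is a map g on configurations; only its values on confs W and components in W matter.\<close>

definition confs :: "'v set \<Rightarrow> ('v \<Rightarrow> bool) set" where
  "confs W = {x. \<forall>v. v \<notin> W \<longrightarrow> \<not> x v}"

definition pos_arc :: "'v set \<Rightarrow> (('v \<Rightarrow> bool) \<Rightarrow> ('v \<Rightarrow> bool)) \<Rightarrow> 'v \<Rightarrow> 'v \<Rightarrow> bool" where
  "pos_arc W g j i \<longleftrightarrow> j \<in> W \<and> i \<in> W \<and>
     (\<exists>x\<in>confs W. \<not> g (x(j := False)) i \<and> g (x(j := True)) i)"

definition neg_arc :: "'v set \<Rightarrow> (('v \<Rightarrow> bool) \<Rightarrow> ('v \<Rightarrow> bool)) \<Rightarrow> 'v \<Rightarrow> 'v \<Rightarrow> bool" where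
  "neg_arc W g j i \<longleftrightarrow> j \<in> W \<and> i \<in> W \<and>
     (\<exists>x\<in>confs W. g (x(j := False)) i \<and> \<not> g (x(j := True)) i)"

definition and_net :: "'v set \<Rightarrow> (('v \<Rightarrow> bool) \<Rightarrow> ('v \<Rightarrow> bool)) \<Rightarrow> bool" where
  "and_net V f \<longleftrightarrow>
     (\<forall>i j. \<not> (pos_arc V f j i \<and> neg_arc V f j i)) \<and>
     (\<forall>i\<in>V. \<forall>x\<in>confs V. f x i \<longleftrightarrow>
        (\<not> (\<exists>j. pos_arc V f j i \<and> \<not> x j)) \<and> \<not> (\<exists>j. neg_arc V f j i \<and> x j))"

definition sub_data :: "'v set \<Rightarrow> 'v set \<Rightarrow> ('v \<Rightarrow> bool) \<Rightarrow> bool" where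
  "sub_data V I z \<longleftrightarrow> I \<noteq> {} \<and> I \<subseteq> V \<and> z \<in> confs (V - I)"

definition subnet :: "'v set \<Rightarrow> (('v \<Rightarrow> bool) \<Rightarrow> ('v \<Rightarrow> bool)) \<Rightarrow> 'v set \<Rightarrow> ('v \<Rightarrow> bool)
    \<Rightarrow> ('v \<Rightarrow> bool) \<Rightarrow> ('v \<Rightarrow> bool)" where
  "subnet V f I z y = (\<lambda>v. v \<in> I \<and> f (\<lambda>u. if u \<in> I then y u else z u) v)"

definition cycle_arcs :: "'v list \<Rightarrow> ('v \<times> 'v) set" where
  "cycle_arcs vs = {(vs ! k, vs ! ((k + 1) mod length vs)) | k. k < length vs}"

definition is_full_cycle :: "'v set \<Rightarrow> (('v \<Rightarrow> bool) \<Rightarrow> ('v \<Rightarrow> bool)) \<Rightarrow> 'v list \<Rightarrow> bool" where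
  "is_full_cycle W g vs \<longleftrightarrow>
     distinct vs \<and> set vs = W \<and> vs \<noteq> [] \<and>
     (\<forall>i j. \<not> (pos_arc W g j i \<and> neg_arc W g j i)) \<and>
     {(j, i). pos_arc W g j i \<or> neg_arc W g j i} = cycle_arcs vs"

definition num_neg_arcs :: "'v set \<Rightarrow> (('v \<Rightarrow> bool) \<Rightarrow> ('v \<Rightarrow> bool)) \<Rightarrow> nat" where
  "num_neg_arcs W g = card {(j, i). neg_arc W g j i}"

definition positive_circular :: "'v set \<Rightarrow> (('v \<Rightarrow> bool) \<Rightarrow> ('v \<Rightarrow> bool)) \<Rightarrow> bool" where
  "positive_circular W g \<longleftrightarrow> (\<exists>vs. is_full_cycle W g vs) \<and> even (num_neg_arcs W g)"

definition negative_circular :: "'v set \<Rightarrow> (('v \<Rightarrow> bool) \<Rightarrow> ('v \<Rightarrow> bool)) \<Rightarrow> bool" where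
  "negative_circular W g \<longleftrightarrow> (\<exists>vs. is_full_cycle W g vs) \<and> odd (num_neg_arcs W g)"

end

theory Submission
  imports Defs
begin

text \<open>Every subnetwork of an and-net is a literal network: each component is a conjunction of
literals, possibly negated. This class is closed under taking subnetworks and under negating a
single component, which only swaps the signs of the arcs into that component.

A circular literal network is self-dual, since every component reads a single literal; hence the
complement of a fixed point is again a fixed point and the fixed point is never unique.

Conversely, take a subnetwork without a unique fixed point all of whose proper subnetworks have
one. Two configurations that agree outside a proper subset and are fixed on it must coincide, so
two distinct fixed points are complementary. Comparing configurations that agree with one of them
on a set S and with the other off S, a closure argument shows that each component reads exactly
one variable; minimality then forces the resulting functional graph to be a single cycle. If the
network has no fixed point at all, negating one component produces two of them, and induction on
the vertex set shows that the negated network is again minimal.\<close>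

section \<open>Literal networks\<close>

definition lits_hold :: "('v \<Rightarrow> bool option) \<Rightarrow> ('v \<Rightarrow> bool) \<Rightarrow> bool" where
  "lits_hold L x \<longleftrightarrow> (\<forall>j s. L j = Some s \<longrightarrow> x j = s)"

text \<open>A literal map L encodes the conjunction of the literals x_j = s with L j = Some s.
In literal form, component v is this conjunction for lit v when c v holds and its negation
otherwise.\<close>

definition literal_form :: "'v set \<Rightarrow> (('v \<Rightarrow> bool) \<Rightarrow> ('v \<Rightarrow> bool))
    \<Rightarrow> ('v \<Rightarrow> 'v \<Rightarrow> bool option) \<Rightarrow> ('v \<Rightarrow> bool) \<Rightarrow> bool" where
  "literal_form I g lit c \<longleftrightarrow>
     (\<forall>v\<in>I. dom (lit v) \<subseteq> I \<and> (\<forall>x\<in>confs I. g x v \<longleftrightarrow> (lits_hold (lit v) x \<longleftrightarrow> c v)))"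

definition literal_net :: "'v set \<Rightarrow> (('v \<Rightarrow> bool) \<Rightarrow> ('v \<Rightarrow> bool)) \<Rightarrow> bool" where
  "literal_net I g \<longleftrightarrow> (\<exists>lit c. literal_form I g lit c)"

definition vanishes_outside :: "'v set \<Rightarrow> (('v \<Rightarrow> bool) \<Rightarrow> ('v \<Rightarrow> bool)) \<Rightarrow> bool" where
  "vanishes_outside I g \<longleftrightarrow> (\<forall>x v. v \<notin> I \<longrightarrow> \<not> g x v)"

definition unique_fixpoint :: "'v set \<Rightarrow> (('v \<Rightarrow> bool) \<Rightarrow> ('v \<Rightarrow> bool)) \<Rightarrow> bool" where
  "unique_fixpoint I g \<longleftrightarrow> (\<exists>!y. y \<in> confs I \<and> g y = y)"

definition proper_subnets_unique :: "'v set \<Rightarrow> (('v \<Rightarrow> bool) \<Rightarrow> ('v \<Rightarrow> bool)) \<Rightarrow> bool" where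
  "proper_subnets_unique I g \<longleftrightarrow>
     (\<forall>J w. sub_data I J w \<and> J \<noteq> I \<longrightarrow> unique_fixpoint J (subnet I g J w))"

definition compl_conf :: "'v set \<Rightarrow> ('v \<Rightarrow> bool) \<Rightarrow> ('v \<Rightarrow> bool)" where
  "compl_conf I y = (\<lambda>u. u \<in> I \<and> \<not> y u)"

definition flip_comp :: "'v \<Rightarrow> (('v \<Rightarrow> bool) \<Rightarrow> ('v \<Rightarrow> bool)) \<Rightarrow> (('v \<Rightarrow> bool) \<Rightarrow> ('v \<Rightarrow> bool))" where
  "flip_comp i g = (\<lambda>x v. if v = i then \<not> g x v else g x v)"

lemma arc_in_support:
  "pos_arc W g j i \<Longrightarrow> j \<in> W" "neg_arc W g j i \<Longrightarrow> j \<in> W"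
  by (simp_all add: pos_arc_def neg_arc_def)

lemma glue_in_confs:
  "y \<in> confs J \<Longrightarrow> w \<in> confs (I - J) \<Longrightarrow> J \<subseteq> I \<Longrightarrow> (\<lambda>u. if u \<in> J then y u else w u) \<in> confs I"
  unfolding confs_def by auto

lemma compl_conf_in_confs: "compl_conf I y \<in> confs I"
  by (auto simp: compl_conf_def confs_def)

lemma compl_conf_compl_conf: "y \<in> confs I \<Longrightarrow> compl_conf I (compl_conf I y) = y"
  by (auto simp: compl_conf_def confs_def)

lemma fixpointI:
  assumes "vanishes_outside I g" "y \<in> confs I" "\<And>v. v \<in> I \<Longrightarrow> g y v = y v"
  shows "g y = y"
proof
  show "g y v = y v" for v
    using assms by (cases "v \<in> I") (auto simp: vanishes_outside_def confs_def)
qed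

lemma vanishes_outside_subnet: "vanishes_outside J (subnet I g J w)"
  by (simp add: vanishes_outside_def subnet_def)

lemma vanishes_outside_flip_comp: "vanishes_outside I g \<Longrightarrow> i \<in> I \<Longrightarrow> vanishes_outside I (flip_comp i g)"
  unfolding vanishes_outside_def flip_comp_def by auto

lemma subnet_subnet:
  assumes "J \<subseteq> I"
  shows "subnet I (subnet V f I z) J w = subnet V f J (\<lambda>u. if u \<in> I then w u else z u)"
proof (intro ext)
  fix y v
  have "(\<lambda>u. if u \<in> I then if u \<in> J then y u else w u else z u)
      = (\<lambda>u. if u \<in> J then y u else if u \<in> I then w u else z u)"
    using assms by auto
  then show "subnet I (subnet V f I z) J w y v = subnet V f J (\<lambda>u. if u \<in> I then w u else z u) y v"
    unfolding subnet_def using assms by auto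
qed

lemma sub_data_trans:
  "sub_data V I z \<Longrightarrow> sub_data I J w \<Longrightarrow> sub_data V J (\<lambda>u. if u \<in> I then w u else z u)"
  unfolding sub_data_def confs_def by auto

lemma subnet_flip_comp:
  "subnet I (flip_comp i g) J w = (if i \<in> J then flip_comp i (subnet I g J w) else subnet I g J w)"
  by (intro ext) (simp add: subnet_def flip_comp_def)

lemma lits_hold_empty [simp]: "lits_hold Map.empty x"
  by (simp add: lits_hold_def)

lemma literal_net_subnet:
  assumes lf: "literal_form I g lit c" and "J \<subseteq> I" and w: "w \<in> confs (I - J)"
  shows "literal_net J (subnet I g J w)"
proof -
  \<comment> \<open>literals outside J are decided by w; if one of them fails, the component is constant\<close>
  define dead where "dead v \<longleftrightarrow> (\<exists>j s. lit v j = Some s \<and> j \<notin> J \<and> w j \<noteq> s)" for v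
  define lit' where "lit' v = (if dead v then Map.empty else lit v |` J)" for v
  define c' where "c' v = (dead v \<noteq> c v)" for v
  have "literal_form J (subnet I g J w) lit' c'"
    unfolding literal_form_def
  proof (intro ballI conjI)
    fix v x assume v: "v \<in> J" and x: "x \<in> confs J"
    let ?y = "\<lambda>u. if u \<in> J then x u else w u"
    have "?y \<in> confs I" using glue_in_confs[OF x w \<open>J \<subseteq> I\<close>] .
    then have "g ?y v \<longleftrightarrow> (lits_hold (lit v) ?y \<longleftrightarrow> c v)"
      using lf v \<open>J \<subseteq> I\<close> unfolding literal_form_def by blast
    moreover have "subnet I g J w x v = g ?y v"
      using v unfolding subnet_def by simp
    moreover have "lits_hold (lit v) ?y \<longleftrightarrow> \<not> dead v \<and> lits_hold (lit v |` J) x"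
      unfolding lits_hold_def dead_def restrict_map_def by (auto split: if_splits)
    ultimately show "subnet I g J w x v \<longleftrightarrow> (lits_hold (lit' v) x \<longleftrightarrow> c' v)"
      by (simp add: lit'_def c'_def)
  qed (auto simp: lit'_def)
  then show ?thesis unfolding literal_net_def by blast
qed

lemma literal_form_flip_comp:
  "literal_form I g lit c \<Longrightarrow> literal_form I (flip_comp i g) lit (c(i := \<not> c i))"
  unfolding literal_form_def flip_comp_def by auto

lemma and_net_literal_form:
  assumes "and_net V f"
  shows "literal_form V (subnet V f V (\<lambda>_. False))
     (\<lambda>i j. if pos_arc V f j i then Some True else if neg_arc V f j i then Some False else None)
     (\<lambda>_. True)"
  unfolding literal_form_def
proof (intro ballI conjI)
  fix v x assume v: "v \<in> V" and x: "x \<in> confs V"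
  have "(\<lambda>u. if u \<in> V then x u else False) = x" using x by (auto simp: confs_def)
  then have "subnet V f V (\<lambda>_. False) x v = f x v" using v by (simp add: subnet_def)
  moreover have "f x v \<longleftrightarrow> \<not> (\<exists>j. pos_arc V f j v \<and> \<not> x j) \<and> \<not> (\<exists>j. neg_arc V f j v \<and> x j)"
    using assms v x unfolding and_net_def by blast
  moreover have "\<not> (pos_arc V f j v \<and> neg_arc V f j v)" for j
    using assms unfolding and_net_def by blast
  ultimately show "subnet V f V (\<lambda>_. False) x v \<longleftrightarrow> (lits_hold
      (\<lambda>j. if pos_arc V f j v then Some True else if neg_arc V f j v then Some False else None) x
      \<longleftrightarrow> True)"
    unfolding lits_hold_def by auto
next
  show "dom (\<lambda>j. if pos_arc V f j v then Some True else if neg_arc V f j v then Some False else None)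
      \<subseteq> V" for v
    by (auto dest: arc_in_support split: if_splits)
qed

lemma and_net_subnet_literal_net:
  assumes "and_net V f" and "sub_data V I z"
  shows "literal_net I (subnet V f I z)"
proof -
  have IV: "I \<subseteq> V" and z: "z \<in> confs (V - I)" using assms(2) by (auto simp: sub_data_def)
  have "(\<lambda>u. if u \<in> V then z u else False) = z" using z by (auto simp: confs_def)
  then have "subnet V (subnet V f V (\<lambda>_. False)) I z = subnet V f I z"
    by (simp add: subnet_subnet[OF IV])
  then show ?thesis
    using literal_net_subnet[OF and_net_literal_form[OF assms(1)] IV z] by simp
qed

section \<open>Circular literal networks\<close>

lemma lits_hold_fun_upd:
  "lits_hold L (x(j := b)) \<longleftrightarrow> (\<forall>s. L j = Some s \<longrightarrow> b = s) \<and> lits_hold (L(j := None)) x"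
  unfolding lits_hold_def by auto

lemma literal_form_arcs:
  assumes lf: "literal_form I g lit c" and i: "i \<in> I"
  shows "pos_arc I g j i \<longleftrightarrow> lit i j = Some (c i)"
    and "neg_arc I g j i \<longleftrightarrow> lit i j = Some (\<not> c i)"
proof -
  have dom: "dom (lit i) \<subseteq> I" using lf i by (simp add: literal_form_def)
  have upd: "g (x(j := b)) i \<longleftrightarrow>
      ((\<forall>s. lit i j = Some s \<longrightarrow> b = s) \<and> lits_hold ((lit i)(j := None)) x \<longleftrightarrow> c i)"
    if "x \<in> confs I" "j \<in> I" for x b
  proof -
    have "x(j := b) \<in> confs I" using that by (auto simp: confs_def)
    then show ?thesis using lf i by (simp add: literal_form_def lits_hold_fun_upd)
  qed
  define x0 where "x0 u \<longleftrightarrow> u \<in> I \<and> lit i u = Some True" for u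
  have x0: "x0 \<in> confs I" "lits_hold ((lit i)(j := None)) x0"
    using dom by (auto simp: x0_def confs_def lits_hold_def)
  show "pos_arc I g j i \<longleftrightarrow> lit i j = Some (c i)"
  proof
    assume "pos_arc I g j i"
    then obtain x where "j \<in> I" "x \<in> confs I" "\<not> g (x(j := False)) i" "g (x(j := True)) i"
      unfolding pos_arc_def by blast
    then show "lit i j = Some (c i)"
      using upd[of x False] upd[of x True] by (cases "lit i j") auto
  next
    assume j: "lit i j = Some (c i)"
    then have "j \<in> I" using dom by auto
    then show "pos_arc I g j i"
      using upd[OF x0(1), of False] upd[OF x0(1), of True] x0(2) i j
      unfolding pos_arc_def by (auto intro!: bexI[OF _ x0(1)])
  qed
  show "neg_arc I g j i \<longleftrightarrow> lit i j = Some (\<not> c i)"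
  proof
    assume "neg_arc I g j i"
    then obtain x where "j \<in> I" "x \<in> confs I" "g (x(j := False)) i" "\<not> g (x(j := True)) i"
      unfolding neg_arc_def by blast
    then show "lit i j = Some (\<not> c i)"
      using upd[of x False] upd[of x True] by (cases "lit i j") auto
  next
    assume j: "lit i j = Some (\<not> c i)"
    then have "j \<in> I" using dom by auto
    then show "neg_arc I g j i"
      using upd[OF x0(1), of False] upd[OF x0(1), of True] x0(2) i j
      unfolding neg_arc_def by (auto intro!: bexI[OF _ x0(1)])
  qed
qed

lemma arcs_flip_comp:
  "pos_arc I (flip_comp i g) j v \<longleftrightarrow> (if v = i then neg_arc I g j v else pos_arc I g j v)"
  "neg_arc I (flip_comp i g) j v \<longleftrightarrow> (if v = i then pos_arc I g j v else neg_arc I g j v)"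
  unfolding pos_arc_def neg_arc_def flip_comp_def by auto

lemma is_full_cycle_flip_comp: "is_full_cycle I (flip_comp i g) vs \<longleftrightarrow> is_full_cycle I g vs"
proof -
  have "{(j, v). pos_arc I (flip_comp i g) j v \<or> neg_arc I (flip_comp i g) j v}
      = {(j, v). pos_arc I g j v \<or> neg_arc I g j v}"
    by (auto simp: arcs_flip_comp split: if_splits)
  moreover have "(\<forall>v j. \<not> (pos_arc I (flip_comp i g) j v \<and> neg_arc I (flip_comp i g) j v))
      \<longleftrightarrow> (\<forall>v j. \<not> (pos_arc I g j v \<and> neg_arc I g j v))"
    by (auto simp: arcs_flip_comp split: if_splits)
  ultimately show ?thesis unfolding is_full_cycle_def by simp
qed

lemma selfdual_not_unique_fixpoint:
  assumes "J \<noteq> {}" and vanish: "vanishes_outside J h"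
    and selfdual: "\<And>y v. y \<in> confs J \<Longrightarrow> v \<in> J \<Longrightarrow> h (compl_conf J y) v \<longleftrightarrow> \<not> h y v"
  shows "\<not> unique_fixpoint J h"
proof
  assume "unique_fixpoint J h"
  then obtain y where y: "y \<in> confs J" "h y = y"
    and unique: "\<And>y'. y' \<in> confs J \<Longrightarrow> h y' = y' \<Longrightarrow> y' = y"
    unfolding unique_fixpoint_def by blast
  have "h (compl_conf J y) = compl_conf J y"
    by (rule fixpointI[OF vanish compl_conf_in_confs])
      (use selfdual y in \<open>auto simp: compl_conf_def\<close>)
  then have "compl_conf J y = y" using unique compl_conf_in_confs by blast
  moreover obtain v where "v \<in> J" using assms(1) by blast
  ultimately show False by (metis compl_conf_def)
qed

lemma literal_form_single_literal:
  assumes "literal_form I g lit c" "v \<in> I" "dom (lit v) = {q}" "x \<in> confs I"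
  shows "g x v \<longleftrightarrow> (x q \<longleftrightarrow> lit v q = Some (c v))"
proof -
  obtain s where s: "lit v q = Some s" using assms(3) by auto
  have "lit v j = None" if "j \<noteq> q" for j using assms(3) that by auto
  then have "lits_hold (lit v) x \<longleftrightarrow> x q = s"
    unfolding lits_hold_def using s by (metis option.distinct(1) option.inject)
  then show ?thesis using assms s unfolding literal_form_def by auto
qed

lemma single_literal_component_flips:
  assumes "literal_form I g lit c" "v \<in> I" "dom (lit v) = {q}" "x \<in> confs I" "x' \<in> confs I"
    and "x' q \<longleftrightarrow> \<not> x q"
  shows "g x' v \<longleftrightarrow> \<not> g x v"
  using literal_form_single_literal[OF assms(1-4)] literal_form_single_literal[OF assms(1-3,5)] assms(6)
  by blast

lemma cycle_arcs_rotation: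
  assumes "\<And>k. k < length vs \<Longrightarrow> vs ! k = p (vs ! ((k + 1) mod length vs))"
  shows "cycle_arcs vs = {(p i, i) | i. i \<in> set vs}"
proof (intro set_eqI iffI)
  fix e assume "e \<in> cycle_arcs vs"
  then obtain k where k: "k < length vs" "e = (vs ! k, vs ! ((k + 1) mod length vs))"
    unfolding cycle_arcs_def by blast
  then have "(k + 1) mod length vs < length vs" by (intro mod_less_divisor) linarith
  then have "vs ! ((k + 1) mod length vs) \<in> set vs" by (rule nth_mem)
  then show "e \<in> {(p i, i) | i. i \<in> set vs}" using assms k by auto
next
  fix e assume "e \<in> {(p i, i) | i. i \<in> set vs}"
  then obtain m where m: "m < length vs" "e = (p (vs ! m), vs ! m)"
    by (auto simp: in_set_conv_nth)
  define k where "k = (m + length vs - 1) mod length vs"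
  have "(k + 1) mod length vs = m" using m(1) by (cases m) (auto simp: k_def mod_Suc_eq)
  moreover have "k < length vs" unfolding k_def using m(1) by (intro mod_less_divisor) linarith
  ultimately show "e \<in> cycle_arcs vs" using assms m(2) unfolding cycle_arcs_def by force
qed

lemma cycle_arcs_predecessor:
  assumes "distinct vs"
  obtains p where "cycle_arcs vs = {(p i, i) | i. i \<in> set vs}"
proof
  let ?n = "length vs"
  define p where "p i = vs ! (((THE m. m < ?n \<and> vs ! m = i) + ?n - 1) mod ?n)" for i
  have "vs ! k = p (vs ! ((k + 1) mod ?n))" if k: "k < ?n" for k
  proof -
    have "(k + 1) mod ?n < ?n" using k by (intro mod_less_divisor) linarith
    then have "(THE m. m < ?n \<and> vs ! m = vs ! ((k + 1) mod ?n)) = (k + 1) mod ?n"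
      using assms by (intro the_equality) (auto simp: nth_eq_iff_index_eq)
    moreover have "((k + 1) mod ?n + ?n - 1) mod ?n = k" using k by (cases "Suc k = ?n") auto
    ultimately show ?thesis by (simp add: p_def)
  qed
  then show "cycle_arcs vs = {(p i, i) | i. i \<in> set vs}" by (rule cycle_arcs_rotation)
qed

lemma orbit_period:
  fixes p :: "'v \<Rightarrow> 'v"
  assumes v0: "v0 \<in> I" and maps: "\<And>v. v \<in> I \<Longrightarrow> p v \<in> I"
    and closed: "\<And>J. J \<subseteq> I \<Longrightarrow> J \<noteq> {} \<Longrightarrow> (\<And>v. v \<in> J \<Longrightarrow> p v \<in> J) \<Longrightarrow> J = I"
  obtains d where "0 < d" "(p ^^ d) v0 = v0"
    "inj_on (\<lambda>k. (p ^^ k) v0) {0..<d}" "(\<lambda>k. (p ^^ k) v0) ` {0..<d} = I"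
proof -
  define P where "P m = (p ^^ m) v0" for m
  have P_0: "P 0 = v0" and P_Suc: "P (Suc m) = p (P m)" for m by (simp_all add: P_def)
  have P_in: "P m \<in> I" for m by (induction m) (simp_all add: P_0 P_Suc v0 maps)
  have segment: "P ` {a..<b} = I" if ab: "a < b" "P a = P b" for a b
  proof (rule closed)
    show "P ` {a..<b} \<subseteq> I" using P_in by auto
    show "P ` {a..<b} \<noteq> {}" using ab(1) by auto
    fix v assume "v \<in> P ` {a..<b}"
    then obtain k where k: "a \<le> k" "k < b" "v = P k" by auto
    show "p v \<in> P ` {a..<b}"
    proof (cases "Suc k < b")
      case True
      then show ?thesis using k P_Suc by (auto intro!: image_eqI[of _ _ "Suc k"])
    next
      case False
      then have "p v = P a" using k ab(2) P_Suc by (metis Suc_lessI)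
      then show ?thesis using ab(1) by auto
    qed
  qed
  have "range P = I"
  proof (rule closed)
    show "range P \<subseteq> I" using P_in by auto
    fix v assume "v \<in> range P"
    then show "p v \<in> range P" by (metis P_Suc rangeE rangeI)
  qed auto
  moreover have "p ` I = I" by (rule closed) (use maps v0 in auto)
  ultimately obtain m where "P (Suc m) = v0" using v0 P_Suc by (metis imageE rangeE)
  then have "\<exists>d. 0 < d \<and> P d = v0" by blast
  define d where "d = (LEAST d. 0 < d \<and> P d = v0)"
  have d: "0 < d" "P d = v0" using LeastI_ex[OF \<open>\<exists>d. 0 < d \<and> P d = v0\<close>] by (simp_all add: d_def)
  have d_least: "P k \<noteq> v0" if "0 < k" "k < d" for k
    using not_less_Least[of k "\<lambda>d. 0 < d \<and> P d = v0"] that by (simp add: d_def)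
  have P_inj: "P a \<noteq> P b" if "a < b" "b < d" for a b
  proof
    assume eq: "P a = P b"
    then have "v0 \<in> P ` {a..<b}" using segment[OF that(1) eq] v0 by simp
    then obtain c where c: "a \<le> c" "c < b" "P c = v0" by auto
    then show False using eq P_0 d_least[of b] d_least[of c] that by (cases "c = 0") auto
  qed
  have "inj_on P {0..<d}"
  proof (rule inj_onI, rule ccontr)
    fix a b assume "a \<in> {0..<d}" "b \<in> {0..<d}" "P a = P b" "a \<noteq> b"
    then show False using P_inj[of a b] P_inj[of b a] by (cases "a < b") auto
  qed
  moreover have "P ` {0..<d} = I" using segment[OF d(1)] d(2) P_0 by simp
  ultimately show thesis using that[OF d(1)] d(2) unfolding P_def[abs_def] by simp
qed

lemma orbit_cycle_list:
  fixes p :: "'v \<Rightarrow> 'v"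
  assumes v0: "v0 \<in> I" and maps: "\<And>v. v \<in> I \<Longrightarrow> p v \<in> I"
    and closed: "\<And>J. J \<subseteq> I \<Longrightarrow> J \<noteq> {} \<Longrightarrow> (\<And>v. v \<in> J \<Longrightarrow> p v \<in> J) \<Longrightarrow> J = I"
  obtains vs where "distinct vs" "set vs = I" "vs \<noteq> []" "cycle_arcs vs = {(p i, i) | i. i \<in> I}"
proof -
  obtain d where d: "0 < d" "(p ^^ d) v0 = v0"
    and inj: "inj_on (\<lambda>k. (p ^^ k) v0) {0..<d}" and img: "(\<lambda>k. (p ^^ k) v0) ` {0..<d} = I"
    by (rule orbit_period[OF v0 maps closed])
  \<comment> \<open>arcs of a cycle list run from each entry to the next, so the orbit is listed backwards\<close>
  define vs where "vs = rev (map (\<lambda>k. (p ^^ k) v0) [0..<d])"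
  have len: "length vs = d" and nth: "k < d \<Longrightarrow> vs ! k = (p ^^ (d - Suc k)) v0" for k
    by (simp_all add: vs_def rev_nth)
  have "vs ! k = p (vs ! ((k + 1) mod length vs))" if "k < length vs" for k
  proof (cases "Suc k < d")
    case True
    then have "d - Suc k = Suc (d - Suc (Suc k))" by simp
    then show ?thesis using True nth that len by simp
  next
    case False
    obtain e where e: "d = Suc e" using d(1) gr0_implies_Suc by blast
    then have "k = e" using False that len by simp
    then show ?thesis using nth[of k] nth[of 0] d(2) len unfolding e by simp
  qed
  then have "cycle_arcs vs = {(p i, i) | i. i \<in> set vs}" by (rule cycle_arcs_rotation)
  moreover have "distinct vs" "set vs = I" using inj img by (simp_all add: vs_def distinct_map)
  ultimately show thesis using that d(1) len by auto
qed

lemma full_cycle_not_unique_fixpoint: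
  assumes "literal_net J h" "vanishes_outside J h" "is_full_cycle J h vs"
  shows "\<not> unique_fixpoint J h"
proof -
  obtain lit c where lf: "literal_form J h lit c" using assms(1) unfolding literal_net_def by blast
  have arcs: "{(j, i). pos_arc J h j i \<or> neg_arc J h j i} = cycle_arcs vs"
    and J: "set vs = J" "vs \<noteq> []" and "distinct vs"
    using assms(3) unfolding is_full_cycle_def by blast+
  then obtain p where p: "cycle_arcs vs = {(p i, i) | i. i \<in> set vs}"
    using cycle_arcs_predecessor by blast
  have dom: "dom (lit v) = {p v}" if v: "v \<in> J" for v
  proof -
    have "j \<in> dom (lit v) \<longleftrightarrow> pos_arc J h j v \<or> neg_arc J h j v" for j
      using literal_form_arcs[OF lf v, of j] by (cases "lit v j") auto
    also have "\<dots> j \<longleftrightarrow> j = p v" for j using arcs p v J(1) by blast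
    finally show ?thesis by blast
  qed
  show ?thesis
  proof (rule selfdual_not_unique_fixpoint[OF _ assms(2)])
    show "J \<noteq> {}" using J by auto
    fix y v assume y: "y \<in> confs J" and v: "v \<in> J"
    have "p v \<in> J" using dom[OF v] lf v unfolding literal_form_def by auto
    then show "h (compl_conf J y) v \<longleftrightarrow> \<not> h y v"
      using single_literal_component_flips[OF lf v dom[OF v] y compl_conf_in_confs]
      by (simp add: compl_conf_def)
  qed
qed

section \<open>Minimal networks without a unique fixed point\<close>

lemma minimal_nonunique_subnet_exists:
  assumes "finite J" "sub_data I J w" "\<not> unique_fixpoint J (subnet I g J w)"
  shows "\<exists>K u. sub_data I K u \<and> K \<subseteq> J \<and> \<not> unique_fixpoint K (subnet I g K u)
    \<and> proper_subnets_unique K (subnet I g K u)"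
  using assms
proof (induction J arbitrary: w rule: finite_psubset_induct)
  case (psubset J)
  show ?case
  proof (cases "proper_subnets_unique J (subnet I g J w)")
    case True
    then show ?thesis using psubset.prems by blast
  next
    case False
    then obtain K u where K: "sub_data J K u" "K \<noteq> J"
      and nonunique: "\<not> unique_fixpoint K (subnet J (subnet I g J w) K u)"
      unfolding proper_subnets_unique_def by blast
    have "K \<subseteq> J" using K(1) by (simp add: sub_data_def)
    then have "\<not> unique_fixpoint K (subnet I g K (\<lambda>v. if v \<in> J then u v else w v))"
      using nonunique by (simp add: subnet_subnet)
    then show ?thesis
      using psubset.IH[OF _ sub_data_trans[OF psubset.prems(1) K(1)]] \<open>K \<subseteq> J\<close> K(2) by blast
  qed
qed

locale minimal_net =
  fixes I :: "'v set" and g :: "('v \<Rightarrow> bool) \<Rightarrow> ('v \<Rightarrow> bool)"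
    and lit :: "'v \<Rightarrow> 'v \<Rightarrow> bool option" and c :: "'v \<Rightarrow> bool"
  assumes nonempty: "I \<noteq> {}" and literal_form: "literal_form I g lit c"
    and vanishes: "vanishes_outside I g" and proper_unique: "proper_subnets_unique I g"
begin

lemma component_iff: "v \<in> I \<Longrightarrow> x \<in> confs I \<Longrightarrow> g x v \<longleftrightarrow> (lits_hold (lit v) x \<longleftrightarrow> c v)"
  using literal_form unfolding literal_form_def by blast

lemma dom_lit_subset: "v \<in> I \<Longrightarrow> dom (lit v) \<subseteq> I"
  using literal_form unfolding literal_form_def by blast

lemma eq_if_fixed_off:
  assumes B: "B \<subseteq> I" "B \<noteq> I" and y: "y1 \<in> confs I" "y2 \<in> confs I"
    and agree: "\<And>u. u \<in> I - B \<Longrightarrow> y1 u = y2 u"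
    and fixed: "\<And>u. u \<in> B \<Longrightarrow> g y1 u = y1 u" "\<And>u. u \<in> B \<Longrightarrow> g y2 u = y2 u"
  shows "y1 = y2"
proof (cases "B = {}")
  case True
  then show ?thesis using y agree by (auto simp: confs_def)
next
  case False
  define w where "w u \<longleftrightarrow> u \<in> I - B \<and> y1 u" for u
  define r where "r y u \<longleftrightarrow> u \<in> B \<and> y u" for y u
  have "sub_data I B w" using False B(1) by (auto simp: sub_data_def w_def confs_def)
  then have "unique_fixpoint B (subnet I g B w)"
    using proper_unique B(2) unfolding proper_subnets_unique_def by blast
  then obtain z where z: "\<And>z'. z' \<in> confs B \<Longrightarrow> subnet I g B w z' = z' \<Longrightarrow> z' = z"
    unfolding unique_fixpoint_def by blast
  have glue: "(\<lambda>u. if u \<in> B then r y u else w u) = y"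
    if "y \<in> confs I" "\<And>u. u \<in> I - B \<Longrightarrow> y u = y1 u" for y
    using that by (auto simp: r_def w_def confs_def)
  have restrict: "r y = z"
    if "y \<in> confs I" "\<And>u. u \<in> I - B \<Longrightarrow> y u = y1 u" "\<And>u. u \<in> B \<Longrightarrow> g y u = y u" for y
  proof (rule z)
    show "r y \<in> confs B" by (simp add: r_def confs_def)
    show "subnet I g B w (r y) = r y"
      unfolding subnet_def by (subst glue[OF that(1,2)]) (use that(3) in \<open>auto simp: r_def\<close>)
  qed
  have "y1 = (\<lambda>u. if u \<in> B then r y1 u else w u)" using glue[OF y(1)] by simp
  also have "\<dots> = (\<lambda>u. if u \<in> B then r y2 u else w u)"
    using restrict[OF y(1) _ fixed(1)] restrict[OF y(2) _ fixed(2)] agree by simp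
  also have "\<dots> = y2" using glue[OF y(2)] agree by simp
  finally show ?thesis .
qed

lemma fixed_off_exists:
  assumes i: "i \<in> I"
  obtains Y where "Y \<in> confs I" "Y i = b" "\<And>u. u \<in> I - {i} \<Longrightarrow> g Y u = Y u"
proof (cases "I - {i} = {}")
  case True
  then show ?thesis using i that[of "\<lambda>u. u = i \<and> b"] by (auto simp: confs_def)
next
  case False
  define w where "w u \<longleftrightarrow> u = i \<and> b" for u
  have w: "w \<in> confs (I - (I - {i}))" using i by (auto simp: w_def confs_def)
  then have "sub_data I (I - {i}) w" using False by (auto simp: sub_data_def)
  then have "unique_fixpoint (I - {i}) (subnet I g (I - {i}) w)"
    using proper_unique i unfolding proper_subnets_unique_def by blast
  then obtain z where z: "z \<in> confs (I - {i})" "subnet I g (I - {i}) w z = z"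
    unfolding unique_fixpoint_def by blast
  define Y where "Y u = (if u \<in> I - {i} then z u else w u)" for u
  have "Y \<in> confs I" unfolding Y_def by (rule glue_in_confs[OF z(1) w]) auto
  moreover have "Y i = b" by (simp add: Y_def w_def)
  moreover have "g Y u = Y u" if "u \<in> I - {i}" for u
    using that fun_cong[OF z(2), of u] unfolding subnet_def Y_def[abs_def] by simp
  ultimately show ?thesis by (rule that)
qed

lemma lit_nonempty:
  assumes nonunique: "\<not> unique_fixpoint I g" and v: "v \<in> I"
  shows "dom (lit v) \<noteq> {}"
proof
  assume "dom (lit v) = {}"
  then have const: "g x v = c v" if "x \<in> confs I" for x
    using component_iff[OF v that] by (simp add: lits_hold_def)
  obtain Y where Y: "Y \<in> confs I" "Y v = c v" "\<And>u. u \<in> I - {v} \<Longrightarrow> g Y u = Y u"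
    using fixed_off_exists[OF v] by blast
  have "g Y = Y" by (rule fixpointI[OF vanishes Y(1)]) (metis Y const Diff_iff singletonD)
  moreover have "y = Y" if "y \<in> confs I" "g y = y" for y
  proof -
    have "y v = Y v" using const[OF that(1)] that(2) Y(2) by metis
    then show "y = Y" by (intro eq_if_fixed_off[of "I - {v}"]) (use that Y v in auto)
  qed
  ultimately show False using nonunique Y(1) unfolding unique_fixpoint_def by blast
qed

lemma flip_comp_fixpoints:
  assumes no_fixpoint: "\<forall>a\<in>confs I. g a \<noteq> a" and i: "i \<in> I"
  obtains a where "a \<in> confs I" "flip_comp i g a = a" "\<not> unique_fixpoint I (flip_comp i g)"
proof -
  have flip_fixed: "flip_comp i g Y = Y"
    if Y: "Y \<in> confs I" "\<And>u. u \<in> I - {i} \<Longrightarrow> g Y u = Y u" for Y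
  proof -
    have "g Y i \<noteq> Y i"
    proof
      assume "g Y i = Y i"
      then have "g Y = Y" using Y by (intro fixpointI[OF vanishes]) auto
      then show False using no_fixpoint Y(1) by blast
    qed
    then show ?thesis
      using Y by (intro fixpointI[OF vanishes_outside_flip_comp[OF vanishes i]]) (auto simp: flip_comp_def)
  qed
  obtain Y0 where Y0: "Y0 \<in> confs I" "Y0 i = False" "\<And>u. u \<in> I - {i} \<Longrightarrow> g Y0 u = Y0 u"
    using fixed_off_exists[OF i] by blast
  obtain Y1 where Y1: "Y1 \<in> confs I" "Y1 i = True" "\<And>u. u \<in> I - {i} \<Longrightarrow> g Y1 u = Y1 u"
    using fixed_off_exists[OF i] by blast
  have "Y0 \<noteq> Y1" using Y0(2) Y1(2) by auto
  then have "\<not> unique_fixpoint I (flip_comp i g)"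
    using flip_fixed[OF Y0(1,3)] flip_fixed[OF Y1(1,3)] Y0(1) Y1(1) unfolding unique_fixpoint_def by blast
  then show ?thesis using that Y0(1) flip_fixed[OF Y0(1,3)] by blast
qed

lemma proper_subnets_unique_flip_comp:
  assumes "finite I" and i: "i \<in> I"
    and smaller: "\<And>K h. K \<subset> I \<Longrightarrow> K \<noteq> {} \<Longrightarrow> literal_net K h \<Longrightarrow> vanishes_outside K h
      \<Longrightarrow> proper_subnets_unique K h \<Longrightarrow> \<not> unique_fixpoint K h \<Longrightarrow> \<exists>vs. is_full_cycle K h vs"
  shows "proper_subnets_unique I (flip_comp i g)"
  unfolding proper_subnets_unique_def
proof (intro allI impI)
  let ?gn = "flip_comp i g"
  fix J w assume J: "sub_data I J w \<and> J \<noteq> I"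
  show "unique_fixpoint J (subnet I ?gn J w)"
  proof (rule ccontr)
    assume "\<not> unique_fixpoint J (subnet I ?gn J w)"
    moreover have "finite J" using J \<open>finite I\<close> finite_subset by (auto simp: sub_data_def)
    ultimately obtain K u where K: "sub_data I K u" "K \<subseteq> J"
      "\<not> unique_fixpoint K (subnet I ?gn K u)" "proper_subnets_unique K (subnet I ?gn K u)"
      using minimal_nonunique_subnet_exists J by blast
    have KI: "K \<subset> I" "K \<noteq> {}" "u \<in> confs (I - K)" using K(1,2) J by (auto simp: sub_data_def)
    have "literal_net K (subnet I ?gn K u)"
      using literal_net_subnet[OF literal_form_flip_comp[OF literal_form] _ KI(3)] KI(1) by blast
    then obtain vs where "is_full_cycle K (subnet I ?gn K u) vs"
      using smaller[OF KI(1,2) _ vanishes_outside_subnet K(4,3)] by blast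
    then have "is_full_cycle K (subnet I g K u) vs"
      by (simp add: subnet_flip_comp is_full_cycle_flip_comp split: if_splits)
    then have "\<not> unique_fixpoint K (subnet I g K u)"
      using full_cycle_not_unique_fixpoint literal_net_subnet[OF literal_form _ KI(3)] KI(1)
        vanishes_outside_subnet by blast
    moreover have "unique_fixpoint K (subnet I g K u)"
      using proper_unique K(1) KI(1) unfolding proper_subnets_unique_def by blast
    ultimately show False by blast
  qed
qed

lemma fixpoints_complementary:
  assumes a: "a \<in> confs I" "g a = a" and b: "b \<in> confs I" "g b = b" and "a \<noteq> b"
  shows "b = compl_conf I a"
proof
  fix u show "b u = compl_conf I a u"
  proof (cases "u \<in> I")
    case False
    then show ?thesis using b(1) by (simp add: compl_conf_def confs_def)
  next
    case True
    have "a u \<noteq> b u"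
    proof
      assume "a u = b u"
      then have "a = b" by (intro eq_if_fixed_off[of "I - {u}"]) (use True a b in auto)
      with \<open>a \<noteq> b\<close> show False ..
    qed
    then show ?thesis using True by (auto simp: compl_conf_def)
  qed
qed

end

section \<open>Complementary fixed points\<close>

locale minimal_net_compl_fixpoints = minimal_net +
  fixes a :: "'v \<Rightarrow> bool"
  assumes a_conf: "a \<in> confs I" and fixpoint_a: "g a = a"
    and fixpoint_compl: "g (compl_conf I a) = compl_conf I a"
begin

definition mix :: "'v set \<Rightarrow> 'v \<Rightarrow> bool" where
  "mix S u \<longleftrightarrow> u \<in> I \<and> (u \<in> S \<longleftrightarrow> a u)"

definition enables :: "'v set \<Rightarrow> 'v \<Rightarrow> bool" where
  "enables S v \<longleftrightarrow> g (mix S) v = a v"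

text \<open>Relabelling the variables so that a becomes the all-true configuration, an and-type
component is a conjunction and an or-type component a disjunction of its inputs.\<close>

definition and_type :: "'v \<Rightarrow> bool" where
  "and_type v \<longleftrightarrow> (\<forall>j s. lit v j = Some s \<longrightarrow> s = a j) \<and> c v = a v"

definition or_type :: "'v \<Rightarrow> bool" where
  "or_type v \<longleftrightarrow> (\<forall>j s. lit v j = Some s \<longrightarrow> s \<noteq> a j) \<and> c v \<noteq> a v"

lemma mix_in_confs: "mix S \<in> confs I"
  by (simp add: mix_def confs_def)

lemma mix_empty: "mix {} = compl_conf I a"
  by (auto simp: mix_def compl_conf_def)

lemma mix_all: "mix I = a"
  by (intro ext) (use a_conf in \<open>auto simp: mix_def confs_def\<close>)

lemma and_or_type:
  assumes v: "v \<in> I"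
  shows "and_type v \<or> or_type v"
proof (cases "lits_hold (lit v) a")
  case True
  then show ?thesis
    using component_iff[OF v a_conf] fun_cong[OF fixpoint_a, of v]
    unfolding and_type_def lits_hold_def by auto
next
  case False
  have holds: "lits_hold (lit v) (compl_conf I a)" and "c v \<noteq> a v"
    using False component_iff[OF v a_conf] component_iff[OF v compl_conf_in_confs]
      fun_cong[OF fixpoint_a, of v] fun_cong[OF fixpoint_compl, of v] v
    by (auto simp: compl_conf_def)
  have "s \<noteq> a j" if "lit v j = Some s" for j s
  proof -
    have "j \<in> I" using that dom_lit_subset[OF v] by blast
    then show ?thesis using holds that by (auto simp: lits_hold_def compl_conf_def)
  qed
  then show ?thesis using \<open>c v \<noteq> a v\<close> unfolding or_type_def by blast
qed

lemma enables_and_type: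
  assumes v: "v \<in> I" and type: "and_type v"
  shows "enables S v \<longleftrightarrow> dom (lit v) \<subseteq> S"
proof -
  have "mix S j = s \<longleftrightarrow> j \<in> S" if "lit v j = Some s" for j s
    using that type dom_lit_subset[OF v] by (auto simp: mix_def and_type_def)
  then have "lits_hold (lit v) (mix S) \<longleftrightarrow> dom (lit v) \<subseteq> S"
    unfolding lits_hold_def by auto
  then show ?thesis
    using component_iff[OF v mix_in_confs] type unfolding enables_def and_type_def by auto
qed

lemma enables_or_type:
  assumes v: "v \<in> I" and type: "or_type v"
  shows "enables S v \<longleftrightarrow> dom (lit v) \<inter> S \<noteq> {}"
proof -
  have "mix S j = s \<longleftrightarrow> j \<notin> S" if "lit v j = Some s" for j s
    using that type dom_lit_subset[OF v] by (auto simp: mix_def or_type_def)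
  then have "lits_hold (lit v) (mix S) \<longleftrightarrow> dom (lit v) \<inter> S = {}"
    unfolding lits_hold_def by auto
  then show ?thesis
    using component_iff[OF v mix_in_confs] type unfolding enables_def or_type_def by auto
qed

lemma enables_mono:
  assumes v: "v \<in> I" and "S \<subseteq> S'" "enables S v"
  shows "enables S' v"
proof (cases "and_type v")
  case True
  then show ?thesis
    using assms enables_and_type[OF v True, of S] enables_and_type[OF v True, of S'] by blast
next
  case False
  then have "or_type v" using and_or_type[OF v] by blast
  then show ?thesis
    using assms enables_or_type[OF v, of S] enables_or_type[OF v, of S'] by blast
qed

lemma no_self_enabling_set:
  assumes B: "B \<subseteq> I" "B \<noteq> {}" "B \<noteq> I" and enabled: "\<forall>u\<in>B. enables B u"
  shows False
proof -
  have eq: "mix B = mix {}"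
  proof (rule eq_if_fixed_off[OF B(1,3) mix_in_confs mix_in_confs])
    show "mix B u = mix {} u" if "u \<in> I - B" for u using that by (simp add: mix_def)
    show "g (mix B) u = mix B u" if "u \<in> B" for u
    proof -
      have "mix B u = a u" using that B(1) by (auto simp: mix_def)
      then show ?thesis using enabled that unfolding enables_def by simp
    qed
    show "g (mix {}) u = mix {} u" if "u \<in> B" for u by (simp add: mix_empty fixpoint_compl)
  qed
  obtain u where "u \<in> B" using B(2) by blast
  then show False using B(1) fun_cong[OF eq, of u] by (auto simp: mix_def)
qed

lemma no_self_disabling_set:
  assumes U: "U \<subseteq> I" "U \<noteq> {}" "U \<noteq> I" and disabled: "\<forall>u\<in>U. \<not> enables (I - U) u"
  shows False
proof -
  have eq: "mix I = mix (I - U)"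
  proof (rule eq_if_fixed_off[OF U(1,3) mix_in_confs mix_in_confs])
    show "mix I u = mix (I - U) u" if "u \<in> I - U" for u using that by (simp add: mix_def)
    show "g (mix I) u = mix I u" if "u \<in> U" for u by (simp add: mix_all fixpoint_a)
    show "g (mix (I - U)) u = mix (I - U) u" if "u \<in> U" for u
    proof -
      have "mix (I - U) u \<longleftrightarrow> \<not> a u" using that U(1) by (auto simp: mix_def)
      then show ?thesis using disabled that unfolding enables_def by simp
    qed
  qed
  obtain u where "u \<in> U" using U(2) by blast
  then show False using U(1) fun_cong[OF eq, of u] by (auto simp: mix_def)
qed

definition enabling_closed :: "'v \<Rightarrow> 'v set \<Rightarrow> bool" where
  "enabling_closed v S \<longleftrightarrow> S \<subseteq> I - {v} \<and> (\<forall>u\<in>I - {v}. enables S u \<longrightarrow> u \<in> S)"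

definition enabling_closure :: "'v \<Rightarrow> 'v \<Rightarrow> 'v set" where
  "enabling_closure v s = \<Inter> {S. s \<in> S \<and> enabling_closed v S}"

lemma enabling_closure_least: "s \<in> S \<Longrightarrow> enabling_closed v S \<Longrightarrow> enabling_closure v s \<subseteq> S"
  unfolding enabling_closure_def by blast

lemma enabling_closure_closed:
  assumes s: "s \<in> I - {v}"
  shows "s \<in> enabling_closure v s" and "enabling_closed v (enabling_closure v s)"
proof -
  let ?C = "enabling_closure v s"
  show "s \<in> ?C" by (simp add: enabling_closure_def)
  have "enabling_closed v (I - {v})" by (simp add: enabling_closed_def)
  then have "?C \<subseteq> I - {v}" by (rule enabling_closure_least[OF s])
  moreover have "u \<in> ?C" if u: "u \<in> I - {v}" "enables ?C u" for u
    unfolding enabling_closure_def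
  proof
    fix S assume "S \<in> {S. s \<in> S \<and> enabling_closed v S}"
    then have "s \<in> S" "enabling_closed v S" by auto
    then have "enables S u" using enables_mono[OF _ enabling_closure_least u(2)] u(1) by blast
    then show "u \<in> S" using u(1) \<open>enabling_closed v S\<close> unfolding enabling_closed_def by blast
  qed
  ultimately show "enabling_closed v ?C" unfolding enabling_closed_def by blast
qed

lemma enabling_closure_enables:
  assumes s: "s \<in> I - {v}" and u: "u \<in> enabling_closure v s" "u \<noteq> s"
  shows "enables (enabling_closure v s) u"
proof (rule ccontr)
  let ?C = "enabling_closure v s"
  assume not_enabled: "\<not> enables ?C u"
  have closed: "?C \<subseteq> I - {v}" "\<And>u'. u' \<in> I - {v} \<Longrightarrow> enables ?C u' \<Longrightarrow> u' \<in> ?C"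
    using enabling_closure_closed(2)[OF s] unfolding enabling_closed_def by blast+
  have "u' \<in> ?C - {u}" if "u' \<in> I - {v}" "enables (?C - {u}) u'" for u'
  proof -
    have "enables ?C u'" using that enables_mono[of u' "?C - {u}" ?C] by blast
    then show ?thesis using closed(2)[OF that(1)] not_enabled by blast
  qed
  then have "enabling_closed v (?C - {u})" using closed(1) unfolding enabling_closed_def by blast
  moreover have "s \<in> ?C - {u}" using enabling_closure_closed(1)[OF s] u(2) by blast
  ultimately have "?C \<subseteq> ?C - {u}" by (rule enabling_closure_least[rotated])
  then show False using u(1) by blast
qed

lemma enabling_closure_not_enables_seed:
  assumes s: "s \<in> I - {v}" and v: "v \<in> I"
  shows "\<not> enables (enabling_closure v s) s"
proof
  let ?C = "enabling_closure v s"
  assume "enables ?C s"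
  then have "\<forall>u\<in>?C. enables ?C u" using enabling_closure_enables[OF s] by blast
  moreover have C: "?C \<subseteq> I - {v}" "s \<in> ?C"
    using enabling_closure_closed[OF s] unfolding enabling_closed_def by blast+
  then have "?C \<subseteq> I" "?C \<noteq> {}" "?C \<noteq> I" using v by blast+
  ultimately show False using no_self_enabling_set by blast
qed

lemma enabling_closure_enables_excluded:
  assumes s: "s \<in> I - {v}" and v: "v \<in> I"
  shows "enables (enabling_closure v s) v"
proof (rule ccontr)
  let ?C = "enabling_closure v s"
  assume v_disabled: "\<not> enables ?C v"
  have C: "?C \<subseteq> I - {v}" "s \<in> ?C" "\<And>u. u \<in> I - {v} \<Longrightarrow> enables ?C u \<Longrightarrow> u \<in> ?C"
    using enabling_closure_closed[OF s] unfolding enabling_closed_def by blast+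
  then have "I - (I - ?C) = ?C" by blast
  then have "\<forall>u\<in>I - ?C. \<not> enables (I - (I - ?C)) u" using C(3) v_disabled by auto
  moreover have "I - ?C \<subseteq> I" "I - ?C \<noteq> {}" "I - ?C \<noteq> I" using v C(1,2) s by blast+
  ultimately show False using no_self_disabling_set by blast
qed

text \<open>Every input of an and-type component v lies in the enabling closure of every other vertex
s. Two distinct inputs j and k would then have the same closure, in which j is enabled (as a
non-seed of the closure of k) and not enabled (as the seed of its own closure).\<close>

lemma and_type_single_literal:
  assumes v: "v \<in> I" "and_type v" and jk: "j \<in> dom (lit v)" "k \<in> dom (lit v)"
  shows "j = k"
proof (rule ccontr)
  assume "j \<noteq> k"
  have lits_in_closure: "dom (lit v) \<subseteq> enabling_closure v s" if "s \<in> I - {v}" for s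
    using enabling_closure_enables_excluded[OF that v(1)] enables_and_type[OF v] by blast
  have closure_in: "enabling_closure v s \<subseteq> I - {v}" if "s \<in> I - {v}" for s
    using enabling_closure_closed(2)[OF that] unfolding enabling_closed_def by blast
  have "v \<notin> dom (lit v)"
  proof
    assume "v \<in> dom (lit v)"
    obtain s where "s \<in> {j, k}" "s \<noteq> v" using \<open>j \<noteq> k\<close> by auto
    then have "s \<in> I - {v}" using jk dom_lit_subset[OF v(1)] by auto
    then show False using lits_in_closure closure_in \<open>v \<in> dom (lit v)\<close> by blast
  qed
  then have j: "j \<in> I - {v}" and k: "k \<in> I - {v}" using jk dom_lit_subset[OF v(1)] by auto
  have "j \<in> enabling_closure v k" "k \<in> enabling_closure v j"
    using lits_in_closure[OF k] lits_in_closure[OF j] jk by blast+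
  then have "enabling_closure v j = enabling_closure v k"
    using enabling_closure_least enabling_closure_closed(2)[OF j] enabling_closure_closed(2)[OF k]
    by (metis subset_antisym)
  then have "enables (enabling_closure v j) j"
    using enabling_closure_enables[OF k \<open>j \<in> enabling_closure v k\<close>] \<open>j \<noteq> k\<close> by simp
  then show False using enabling_closure_not_enables_seed[OF j v(1)] by blast
qed

lemma single_literal:
  assumes v: "v \<in> I" and jk: "j \<in> dom (lit v)" "k \<in> dom (lit v)"
  shows "j = k"
proof (cases "and_type v")
  case True
  show ?thesis by (rule and_type_single_literal[OF v True jk])
next
  case False
  then have "or_type v" using and_or_type[OF v] by blast
  interpret dual: minimal_net_compl_fixpoints I g lit c "compl_conf I a"
    by (intro minimal_net_compl_fixpoints.intro minimal_net_axioms
        minimal_net_compl_fixpoints_axioms.intro compl_conf_in_confs)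
      (simp_all add: fixpoint_compl compl_conf_compl_conf[OF a_conf] fixpoint_a)
  have "dual.and_type v"
    unfolding dual.and_type_def using \<open>or_type v\<close> dom_lit_subset[OF v] v
    unfolding or_type_def by (auto simp: compl_conf_def dom_def subset_iff)
  then show ?thesis using dual.and_type_single_literal[OF v _ jk] by blast
qed

end

section \<open>Minimal networks are circular\<close>

context minimal_net
begin

lemma full_cycle_of_single_literals:
  assumes dom: "\<And>v. v \<in> I \<Longrightarrow> dom (lit v) = {p v}"
  shows "\<exists>vs. is_full_cycle I g vs"
proof -
  have maps: "p v \<in> I" if "v \<in> I" for v using dom[OF that] dom_lit_subset[OF that] by auto
  have closed: "J = I" if J: "J \<subseteq> I" "J \<noteq> {}" "\<And>v. v \<in> J \<Longrightarrow> p v \<in> J" for J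
  proof (rule ccontr)
    assume "J \<noteq> I"
    have w: "(\<lambda>_. False) \<in> confs (I - J)" by (simp add: confs_def)
    then have "sub_data I J (\<lambda>_. False)" using J by (simp add: sub_data_def)
    then have "unique_fixpoint J (subnet I g J (\<lambda>_. False))"
      using proper_unique \<open>J \<noteq> I\<close> unfolding proper_subnets_unique_def by blast
    moreover have "\<not> unique_fixpoint J (subnet I g J (\<lambda>_. False))"
    proof (rule selfdual_not_unique_fixpoint[OF J(2) vanishes_outside_subnet])
      fix y v assume y: "y \<in> confs J" and v: "v \<in> J"
      let ?x = "\<lambda>u. if u \<in> J then y u else False"
      let ?x' = "\<lambda>u. if u \<in> J then compl_conf J y u else False"
      have "?x' (p v) \<longleftrightarrow> \<not> ?x (p v)" using J(3)[OF v] by (simp add: compl_conf_def)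
      then have "g ?x' v \<longleftrightarrow> \<not> g ?x v"
        using single_literal_component_flips[OF literal_form _ dom glue_in_confs[OF y w J(1)]
            glue_in_confs[OF compl_conf_in_confs w J(1)]] v J(1) by blast
      then show "subnet I g J (\<lambda>_. False) (compl_conf J y) v \<longleftrightarrow> \<not> subnet I g J (\<lambda>_. False) y v"
        using v by (simp add: subnet_def)
    qed
    ultimately show False by blast
  qed
  have arcs: "pos_arc I g j i \<or> neg_arc I g j i \<longleftrightarrow> i \<in> I \<and> j = p i" for i j
  proof (cases "i \<in> I")
    case False
    then show ?thesis by (simp add: pos_arc_def neg_arc_def)
  next
    case True
    have "lit i j \<noteq> None \<longleftrightarrow> j = p i" using dom[OF True] by blast
    then show ?thesis using literal_form_arcs[OF literal_form True, of j] True by (cases "lit i j") auto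
  qed
  have single_sign: "\<not> (pos_arc I g j i \<and> neg_arc I g j i)" for i j
    using literal_form_arcs[OF literal_form] by (cases "i \<in> I") (auto simp: pos_arc_def)
  obtain v0 where "v0 \<in> I" using nonempty by blast
  then obtain vs where vs: "distinct vs" "set vs = I" "vs \<noteq> []" "cycle_arcs vs = {(p i, i) | i. i \<in> I}"
    using orbit_cycle_list[of v0 I p] maps closed by blast
  have "{(j, i). pos_arc I g j i \<or> neg_arc I g j i} = cycle_arcs vs" using arcs vs(4) by auto
  then show ?thesis using vs single_sign unfolding is_full_cycle_def by blast
qed

lemma full_cycle_if_fixpoint:
  assumes nonunique: "\<not> unique_fixpoint I g" and a: "a \<in> confs I" "g a = a"
  shows "\<exists>vs. is_full_cycle I g vs"
proof -
  obtain b where b: "b \<in> confs I" "g b = b" "b \<noteq> a"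
    using nonunique a unfolding unique_fixpoint_def by blast
  then have "g (compl_conf I a) = compl_conf I a" using fixpoints_complementary[OF a b(1,2)] by auto
  then interpret minimal_net_compl_fixpoints I g lit c a
    by (intro minimal_net_compl_fixpoints.intro minimal_net_axioms
        minimal_net_compl_fixpoints_axioms.intro a)
  have "\<exists>q. dom (lit v) = {q}" if "v \<in> I" for v
    using lit_nonempty[OF nonunique that] single_literal[OF that] by blast
  then obtain p where "\<And>v. v \<in> I \<Longrightarrow> dom (lit v) = {p v}" by metis
  then show ?thesis by (rule full_cycle_of_single_literals)
qed

end

theorem minimal_nonunique_is_full_cycle:
  assumes "finite I" "I \<noteq> {}" "literal_net I g" "vanishes_outside I g"
    "proper_subnets_unique I g" "\<not> unique_fixpoint I g"
  shows "\<exists>vs. is_full_cycle I g vs"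
  using assms
proof (induction I arbitrary: g rule: finite_psubset_induct)
  case (psubset I)
  obtain lit c where lf: "literal_form I g lit c" using psubset.prems(2) unfolding literal_net_def by blast
  interpret minimal_net I g lit c by (rule minimal_net.intro) (use psubset.prems lf in auto)
  show ?case
  proof (cases "\<exists>a\<in>confs I. g a = a")
    case True
    then show ?thesis using full_cycle_if_fixpoint psubset.prems(5) by blast
  next
    case False
    obtain i where i: "i \<in> I" using nonempty by blast
    interpret flipped: minimal_net I "flip_comp i g" lit "c(i := \<not> c i)"
      using nonempty literal_form_flip_comp[OF lf] vanishes_outside_flip_comp[OF vanishes i]
        proper_subnets_unique_flip_comp[OF psubset.hyps i psubset.IH]
      by (rule minimal_net.intro)
    obtain a where "a \<in> confs I" "flip_comp i g a = a" "\<not> unique_fixpoint I (flip_comp i g)"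
      using flip_comp_fixpoints[OF _ i] False by blast
    then have "\<exists>vs. is_full_cycle I (flip_comp i g) vs" using flipped.full_cycle_if_fixpoint by blast
    then show ?thesis by (simp add: is_full_cycle_flip_comp)
  qed
qed

lemma nonunique_subnet_full_cycle_subnet:
  assumes "finite V" "and_net V f" "sub_data V I z" "\<not> unique_fixpoint I (subnet V f I z)"
  obtains K u vs where "sub_data V K u" "is_full_cycle K (subnet V f K u) vs"
proof -
  have "finite I" using assms(1,3) finite_subset by (auto simp: sub_data_def)
  then obtain K u where K: "sub_data V K u" "\<not> unique_fixpoint K (subnet V f K u)"
    "proper_subnets_unique K (subnet V f K u)"
    using minimal_nonunique_subnet_exists[OF _ assms(3,4)] by blast
  moreover have "finite K" "K \<noteq> {}" using K(1) assms(1) finite_subset by (auto simp: sub_data_def)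
  ultimately obtain vs where "is_full_cycle K (subnet V f K u) vs"
    using minimal_nonunique_is_full_cycle[OF _ _ and_net_subnet_literal_net[OF assms(2) K(1)]
        vanishes_outside_subnet K(3,2)] by blast
  then show thesis using that K(1) by blast
qed

theorem corollary9:
  fixes V :: "'v set" and f :: "('v \<Rightarrow> bool) \<Rightarrow> ('v \<Rightarrow> bool)"
  assumes "finite V" and "V \<noteq> {}" and "and_net V f"
  shows "(\<forall>I z. sub_data V I z \<longrightarrow>
             (\<exists>!y. y \<in> confs I \<and> subnet V f I z y = y))
         \<longleftrightarrow>
         \<not> (\<exists>I z. sub_data V I z \<and>
               (positive_circular I (subnet V f I z) \<or> negative_circular I (subnet V f I z)))"
    (is "?unique \<longleftrightarrow> \<not> ?circular")
proof
  assume ?unique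
  show "\<not> ?circular"
  proof
    assume ?circular
    then obtain I z vs where sd: "sub_data V I z" and cycle: "is_full_cycle I (subnet V f I z) vs"
      unfolding positive_circular_def negative_circular_def by blast
    have "unique_fixpoint I (subnet V f I z)"
      using \<open>?unique\<close>[rule_format, OF sd] unfolding unique_fixpoint_def .
    moreover have "\<not> unique_fixpoint I (subnet V f I z)"
      by (rule full_cycle_not_unique_fixpoint[OF and_net_subnet_literal_net[OF assms(3) sd]
            vanishes_outside_subnet cycle])
    ultimately show False by blast
  qed
next
  assume "\<not> ?circular"
  show ?unique
  proof (intro allI impI, rule ccontr)
    fix I z assume sd: "sub_data V I z"
      and nonunique: "\<not> (\<exists>!y. y \<in> confs I \<and> subnet V f I z y = y)"
    have "\<not> unique_fixpoint I (subnet V f I z)" using nonunique unfolding unique_fixpoint_def .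
    then obtain K u vs where K: "sub_data V K u" "is_full_cycle K (subnet V f K u) vs"
      by (rule nonunique_subnet_full_cycle_subnet[OF assms(1,3) sd])
    then show False
      using \<open>\<not> ?circular\<close> K unfolding positive_circular_def negative_circular_def by blast
  qed
qed

end
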